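(* Let $a=(a_i)_{i\in\mathbb Z}$ be any sequence of complex numbers and let $\mu=(p_1,\dots,p_d\mid q_1,\dots,q_d)$ be a Young diagram in Frobenius notation. Then $s_{\mu;a}=\det[s_{(p_i\mid q_j);a}]_{i,j=1}^d$ (Giambelli formula), where $(p\mid q)$ denotes the hook diagram with Frobenius coordinates $p,q$.
   Context: $\Lambda$ is the algebra of symmetric functions over $\mathbb C$ with complete homogeneous $h_k$ and elementary $e_k$. For a sequence $a=(a_i)_{i\in\mathbb Z}$ define $h_{k;a}=\sum_{i=1}^k(-1)^{k-i}e_{k-i}(a_1,\dots,a_{k-1})h_i$ for $k\ge1$, $h_{0;a}=1$, $h_{k;a}=0$ for $k<0$; let $(\tau^ra)_i=a_{i+r}$; and set $s_{\mu;a}=\det[h_{\mu_i-i+j;\,\tau^{1-j}a}]_{i,j=1}^N$ for any $N\ge\ell(\mu)$. Frobenius notation: a Young diagram $\mu$ with $d$ diagonal boxes is written $(p_1,\dots,p_d\mid q_1,\dots,q_d)$ with $p_i=\mu_i-i$, $q_i=\mu'_i-i$, $\mu'$ the transposed diagram. *)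

theory Defs
  imports Complex_Main "HOL-Library.Poly_Mapping" "Jordan_Normal_Form.Determinant"
begin

(* Lambda over C, realised as the free polynomial ring C[h_1,h_2,...]
   (Lambda is freely generated by the complete homogeneous h_k, k>=1). *)
type_synonym sym_fun = "(nat \<Rightarrow>\<^sub>0 nat) \<Rightarrow>\<^sub>0 complex"

definition cst :: "complex \<Rightarrow> sym_fun" where
  "cst c = Poly_Mapping.single 0 c"

definition hh :: "nat \<Rightarrow> sym_fun" where
  "hh k = (if k = 0 then 1 else Poly_Mapping.single (Poly_Mapping.single k 1) 1)"

fun esym :: "nat \<Rightarrow> complex list \<Rightarrow> complex" where
  "esym 0 xs = 1"
| "esym (Suc k) [] = 0"
| "esym (Suc k) (x # xs) = esym (Suc k) xs + x * esym k xs"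

definition hka :: "int \<Rightarrow> (int \<Rightarrow> complex) \<Rightarrow> sym_fun" where
  "hka k a = (if k < 0 then 0 else if k = 0 then 1 else
     (\<Sum>i=1..nat k. cst ((-1) ^ (nat k - i) *
         esym (nat k - i) (map (\<lambda>j. a (int j)) [1..<nat k])) * hh i))"

definition tau :: "int \<Rightarrow> (int \<Rightarrow> complex) \<Rightarrow> int \<Rightarrow> complex" where
  "tau r a = (\<lambda>i. a (i + r))"

definition young :: "nat list \<Rightarrow> bool" where
  "young mu \<longleftrightarrow> sorted_wrt (\<ge>) mu \<and> (\<forall>x\<in>set mu. 0 < x)"

definition part :: "nat list \<Rightarrow> nat \<Rightarrow> nat" where
  "part mu i = (if 1 \<le> i \<and> i \<le> length mu then mu ! (i - 1) else 0)"

definition conj_part :: "nat list \<Rightarrow> nat \<Rightarrow> nat" where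
  "conj_part mu j = card {i. 1 \<le> i \<and> i \<le> length mu \<and> j \<le> part mu i}"

definition schur_a :: "nat list \<Rightarrow> (int \<Rightarrow> complex) \<Rightarrow> sym_fun" where
  "schur_a mu a = det (mat (length mu) (length mu)
     (\<lambda>(i, j). hka (int (part mu (i+1)) - int (i+1) + int (j+1)) (tau (1 - int (j+1)) a)))"

definition frob_d :: "nat list \<Rightarrow> nat" where
  "frob_d mu = card {i. 1 \<le> i \<and> i \<le> part mu i}"

definition frob_p :: "nat list \<Rightarrow> nat \<Rightarrow> nat" where
  "frob_p mu i = part mu i - i"

definition frob_q :: "nat list \<Rightarrow> nat \<Rightarrow> nat" where
  "frob_q mu i = conj_part mu i - i"

definition hook :: "nat \<Rightarrow> nat \<Rightarrow> nat list" where
  "hook p q = Suc p # replicate q 1"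

end

theory Submission
  imports Defs
begin

(* Column k (counted from 0) of the matrix defining s_{mu;a} only involves h_{m; tau^-k a}, so
   T = [h_{k-l; tau^-k a}]_{l,k} is upper unitriangular.  Row i of that matrix is
   u_i = [h_{p_i+k+1; tau^-k a}]_k when i <= d, and row i-1-mu_i of T when i > d.  Factoring the
   matrix as Z T, where Z has the rows u_i T^-1 on top of unit vectors, Laplace expansion along the
   unit rows leaves the d x d minor of the vectors u_i T^-1 on the columns q_1 > ... > q_d: these
   are the free indices, because {q_j} and {i-1-mu_i | i > d} partition {0, ..., N-1}.  A hook
   (p|q) has d = 1 and q_1 = q, so the same computation identifies the entries of that minor,
   up to the column signs (-1)^q_j, with the s_{(p_i|q_j);a}. *)

section \<open>Determinants of matrices stacked over unit rows\<close>

definition stacked_rows_mat ::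
  "nat \<Rightarrow> nat \<Rightarrow> (nat \<Rightarrow> nat \<Rightarrow> 'a) \<Rightarrow> (nat \<Rightarrow> nat \<Rightarrow> 'a) \<Rightarrow> nat list \<Rightarrow> 'a mat" where
  "stacked_rows_mat n d u t C =
     mat n n (\<lambda>(i, k). if i < d then u i k else t (C ! (i - d)) k)"

abbreviation unit_rows_mat ::
  "nat \<Rightarrow> nat \<Rightarrow> (nat \<Rightarrow> nat \<Rightarrow> 'a::zero_neq_one) \<Rightarrow> nat list \<Rightarrow> 'a mat" where
  "unit_rows_mat n d f C \<equiv> stacked_rows_mat n d f (\<lambda>l k. of_bool (l = k)) C"

definition signed_col_minor :: "nat \<Rightarrow> (nat \<Rightarrow> nat \<Rightarrow> 'a::comm_ring_1) \<Rightarrow> nat list \<Rightarrow> 'a mat" where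
  "signed_col_minor d f K = mat d d (\<lambda>(i, j). (-1) ^ (K ! j) * f i (K ! j))"

definition index_split :: "nat list \<Rightarrow> nat list \<Rightarrow> nat \<Rightarrow> bool" where
  "index_split K C n \<longleftrightarrow> sorted_wrt (>) K \<and> sorted_wrt (<) C \<and>
     set K \<inter> set C = {} \<and> set K \<union> set C = {..<n}"

lemma card_union_sorted_lists:
  fixes K C :: "'a::linorder list"
  assumes "sorted_wrt (>) K" and "sorted_wrt (<) C" and "set K \<inter> set C = {}"
  shows "card (set K \<union> set C) = length K + length C"
proof -
  have "distinct K" "distinct C"
    using assms(1,2) strict_sorted_iff[of C] strict_sorted_iff[of "rev K"]
    by (auto simp: sorted_wrt_rev)
  with assms(3) show ?thesis
    by (simp add: card_Un_disjoint distinct_card)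
qed

lemma index_split_length:
  assumes "index_split K C n"
  shows "length K + length C = n"
  using assms card_union_sorted_lists[of K C] by (simp add: index_split_def)

lemma index_splitI:
  assumes "sorted_wrt (>) K" and "sorted_wrt (<) C" and "set K \<inter> set C = {}"
    and "set K \<union> set C \<subseteq> {..<n}" and "length K + length C = n"
  shows "index_split K C n"
  using assms card_union_sorted_lists[of K C] by (simp add: index_split_def card_subset_eq)

lemma index_split_Suc_in_right:
  assumes "index_split K C (Suc n)" and "n \<in> set C"
  obtains C' where "C = C' @ [n]" and "index_split K C' n"
proof -
  have sC: "sorted_wrt (<) C" and un: "set K \<union> set C = {..<Suc n}"
    using assms(1) by (auto simp: index_split_def)
  obtain C' ys where C: "C = C' @ n # ys"
    using assms(2) by (meson split_list)
  have "ys = []"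
    using sC un C by (cases ys) (auto simp: sorted_wrt_append)
  moreover have "set K \<union> set C' = {..<n}"
  proof -
    have "n \<notin> set K" "n \<notin> set C'"
      using assms sC C by (auto simp: index_split_def sorted_wrt_append)
    then have "set K \<union> set C' = (set K \<union> set C) - {n}"
      using C \<open>ys = []\<close> by auto
    then show ?thesis
      using un by (simp add: lessThan_Suc)
  qed
  ultimately have "index_split K C' n"
    using assms(1) C by (auto simp: index_split_def sorted_wrt_append)
  with C \<open>ys = []\<close> show thesis
    using that by blast
qed

lemma index_split_Suc_in_left:
  assumes "index_split K C (Suc n)" and "n \<in> set K"
  obtains K' where "K = n # K'" and "index_split K' C n"
proof -
  have sK: "sorted_wrt (>) K" and un: "set K \<union> set C = {..<Suc n}"
    using assms(1) by (auto simp: index_split_def)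
  obtain xs K' where K: "K = xs @ n # K'"
    using assms(2) by (meson split_list)
  have "xs = []"
    using sK un K by (cases xs) (auto simp: sorted_wrt_append)
  moreover have "set K' \<union> set C = {..<n}"
  proof -
    have "n \<notin> set K'" "n \<notin> set C"
      using assms sK K by (auto simp: index_split_def sorted_wrt_append)
    then have "set K' \<union> set C = (set K \<union> set C) - {n}"
      using K \<open>xs = []\<close> by auto
    then show ?thesis
      using un by (simp add: lessThan_Suc)
  qed
  ultimately have "index_split K' C n"
    using assms(1) K by (auto simp: index_split_def)
  with K \<open>xs = []\<close> show thesis
    using that by blast
qed

lemma index_split_SucE:
  assumes "index_split K C (Suc n)"
  obtains C' where "C = C' @ [n]" and "index_split K C' n"
        | K' where "K = n # K'" and "index_split K' C n"
proof -
  have "n \<in> set C \<or> n \<in> set K"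
    using assms by (auto simp: index_split_def)
  then show thesis
    using index_split_Suc_in_right[OF assms] index_split_Suc_in_left[OF assms] that by blast
qed

lemma det_stacked_unit_rows_snoc:
  fixes f :: "nat \<Rightarrow> nat \<Rightarrow> 'a::comm_ring_1"
  assumes "length C + d = n"
  shows "det (unit_rows_mat (Suc n) d f (C @ [n]))
       = det (unit_rows_mat n d f C)"
    (is "det ?A = _")
proof -
  have "det ?A = (\<Sum>j<Suc n. ?A $$ (n, j) * cofactor ?A n j)"
    by (rule laplace_expansion_row) (auto simp: stacked_rows_mat_def)
  also have "\<dots> = cofactor ?A n n"
  proof -
    have "n - d = length C"
      using assms by simp
    then show ?thesis
      using assms by (simp add: stacked_rows_mat_def nth_append)
  qed
  also have "\<dots> = det (mat_delete ?A n n)"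
    by (simp add: cofactor_def)
  also have "mat_delete ?A n n = unit_rows_mat n d f C"
    using assms by (intro eq_matI) (auto simp: mat_delete_def stacked_rows_mat_def nth_append)
  finally show ?thesis .
qed

lemma det_stacked_unit_rows_last_col:
  fixes f :: "nat \<Rightarrow> nat \<Rightarrow> 'a::comm_ring_1"
  assumes "length C + d = n" and "n \<notin> set C"
  shows "det (unit_rows_mat (Suc n) (Suc d) f C)
       = (\<Sum>i<Suc d. (-1) ^ (i + n) * f i n *
            det (unit_rows_mat n d (\<lambda>i'. f (insert_index i i')) C))"
    (is "det ?A = _")
proof -
  have "det ?A = (\<Sum>i<Suc n. ?A $$ (i, n) * cofactor ?A i n)"
    by (rule laplace_expansion_column) (auto simp: stacked_rows_mat_def)
  also have "\<dots> = (\<Sum>i<Suc d. ?A $$ (i, n) * cofactor ?A i n)"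
  proof (rule sum.mono_neutral_right)
    show "\<forall>i\<in>{..<Suc n} - {..<Suc d}. ?A $$ (i, n) * cofactor ?A i n = 0"
    proof
      fix i assume i: "i \<in> {..<Suc n} - {..<Suc d}"
      then have "C ! (i - Suc d) \<in> set C"
        using assms(1) by auto
      with i assms(2) show "?A $$ (i, n) * cofactor ?A i n = 0"
        by (auto simp: stacked_rows_mat_def)
    qed
  qed (use assms in auto)
  also have "\<dots> = (\<Sum>i<Suc d. (-1) ^ (i + n) * f i n *
            det (unit_rows_mat n d (\<lambda>i'. f (insert_index i i')) C))"
  proof (rule sum.cong[OF refl])
    fix i assume "i \<in> {..<Suc d}"
    then have "mat_delete ?A i n
        = unit_rows_mat n d (\<lambda>i'. f (insert_index i i')) C"
      by (intro eq_matI) (auto simp: mat_delete_def stacked_rows_mat_def insert_index_def)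
    with \<open>i \<in> {..<Suc d}\<close> assms show "?A $$ (i, n) * cofactor ?A i n = (-1) ^ (i + n) * f i n *
            det (unit_rows_mat n d (\<lambda>i'. f (insert_index i i')) C)"
      by (simp add: cofactor_def stacked_rows_mat_def)
  qed
  finally show ?thesis .
qed

lemma det_signed_col_minor_Cons:
  "det (signed_col_minor (Suc d) f (k # K))
     = (\<Sum>i<Suc d. (-1) ^ (i + k) * f i k * det (signed_col_minor d (\<lambda>i'. f (insert_index i i')) K))"
    (is "det ?B = _")
proof -
  have "det ?B = (\<Sum>i<Suc d. ?B $$ (i, 0) * cofactor ?B i 0)"
    by (rule laplace_expansion_column) (auto simp: signed_col_minor_def)
  also have "\<dots> = (\<Sum>i<Suc d. (-1) ^ (i + k) * f i k *
                     det (signed_col_minor d (\<lambda>i'. f (insert_index i i')) K))"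
  proof (rule sum.cong[OF refl])
    fix i assume "i \<in> {..<Suc d}"
    then have "mat_delete ?B i 0 = signed_col_minor d (\<lambda>i'. f (insert_index i i')) K"
      by (intro eq_matI) (auto simp: mat_delete_def signed_col_minor_def insert_index_def)
    with \<open>i \<in> {..<Suc d}\<close> show "?B $$ (i, 0) * cofactor ?B i 0 = (-1) ^ (i + k) * f i k *
                     det (signed_col_minor d (\<lambda>i'. f (insert_index i i')) K)"
      by (simp add: cofactor_def signed_col_minor_def power_add)
  qed
  finally show ?thesis .
qed

lemma det_stacked_unit_rows:
  fixes f :: "nat \<Rightarrow> nat \<Rightarrow> 'a::comm_ring_1"
  assumes "index_split K C n" and "length K = d"
  shows "det (unit_rows_mat n d f C) = det (signed_col_minor d f K)"
  using assms
proof (induction n arbitrary: d f K C)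
  case 0
  then show ?case
    by (simp add: index_split_def stacked_rows_mat_def signed_col_minor_def)
next
  case (Suc n)
  from Suc.prems(1) show ?case
  proof (cases rule: index_split_SucE)
    case (1 C')
    then have "length C' + d = n"
      using index_split_length Suc.prems(2) by fastforce
    then show ?thesis
      using 1 Suc.IH Suc.prems(2) by (simp add: det_stacked_unit_rows_snoc)
  next
    case (2 K')
    then have "length C + length K' = n" and "n \<notin> set C"
      using index_split_length[OF Suc.prems(1)] Suc.prems(1) by (auto simp: index_split_def)
    then show ?thesis
      using 2 Suc.IH Suc.prems(2)
      by (auto simp: det_stacked_unit_rows_last_col det_signed_col_minor_Cons add.commute)
  qed
qed

(* Forward substitution: the row vector x with x T = u for the upper unitriangular T = [t l k]. *)
function unitri_coeffs :: "(nat \<Rightarrow> nat \<Rightarrow> 'a::comm_ring_1) \<Rightarrow> (nat \<Rightarrow> 'a) \<Rightarrow> nat \<Rightarrow> 'a" where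
  "unitri_coeffs t u k = u k - (\<Sum>l<k. unitri_coeffs t u l * t l k)"
  by pat_completeness auto
termination
  by (relation "measure (\<lambda>(t, u, k). k)") auto

declare unitri_coeffs.simps [simp del]

lemma sum_unitri_coeffs:
  assumes lower_zero: "\<And>l k. k < l \<Longrightarrow> t l k = 0" and diag_one: "\<And>l. t l l = 1"
    and "k < n"
  shows "(\<Sum>l<n. unitri_coeffs t u l * t l k) = u k"
proof -
  have "(\<Sum>l<n. unitri_coeffs t u l * t l k) = (\<Sum>l<Suc k. unitri_coeffs t u l * t l k)"
    by (rule sum.mono_neutral_right) (use \<open>k < n\<close> lower_zero in auto)
  also have "\<dots> = (\<Sum>l<k. unitri_coeffs t u l * t l k) + unitri_coeffs t u k"
    using diag_one by simp
  also have "\<dots> = u k"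
    by (subst (2) unitri_coeffs.simps) simp
  finally show ?thesis .
qed

lemma stacked_rows_mat_unitri_factor:
  assumes lower_zero: "\<And>l k. k < l \<Longrightarrow> t l k = 0" and diag_one: "\<And>l. t l l = 1"
    and "set C \<subseteq> {..<n}" and "length C + d = n"
  shows "stacked_rows_mat n d u t C
       = unit_rows_mat n d (\<lambda>i. unitri_coeffs t (u i)) C * mat n n (\<lambda>(l, k). t l k)"
    (is "_ = ?Z * ?T")
proof (rule eq_matI)
  fix i k assume "i < dim_row (?Z * ?T)" and "k < dim_col (?Z * ?T)"
  then have i: "i < n" and k: "k < n"
    by (auto simp: stacked_rows_mat_def)
  show "stacked_rows_mat n d u t C $$ (i, k) = (?Z * ?T) $$ (i, k)"
  proof (cases "i < d")
    case True
    then show ?thesis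
      using i k sum_unitri_coeffs[of t, OF lower_zero diag_one k]
      by (simp add: stacked_rows_mat_def scalar_prod_def lessThan_atLeast0)
  next
    case False
    then have "C ! (i - d) \<in> set C"
      using assms(4) i by simp
    then have "C ! (i - d) < n"
      using assms(3) by auto
    with False show ?thesis
      using i k
      by (simp add: stacked_rows_mat_def scalar_prod_def of_bool_def if_distrib[of "\<lambda>x. x * _"]
          sum.delta cong: if_cong)
  qed
qed (auto simp: stacked_rows_mat_def)

lemma det_unitri_mat:
  fixes t :: "nat \<Rightarrow> nat \<Rightarrow> 'a::comm_ring_1"
  assumes lower_zero: "\<And>l k. k < l \<Longrightarrow> t l k = 0" and diag_one: "\<And>l. t l l = 1"
  shows "det (mat n n (\<lambda>(l, k). t l k)) = 1"
proof -
  have "diag_mat (mat n n (\<lambda>(l, k). t l k)) = map (\<lambda>i. 1) [0..<n]"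
    by (simp add: diag_mat_def diag_one)
  then show ?thesis
    by (subst det_upper_triangular[of _ n])
      (auto simp: upper_triangular_def lower_zero map_replicate_const)
qed

lemma det_stacked_rows_mat:
  fixes t :: "nat \<Rightarrow> nat \<Rightarrow> 'a::comm_ring_1"
  assumes lower_zero: "\<And>l k. k < l \<Longrightarrow> t l k = 0" and diag_one: "\<And>l. t l l = 1"
    and split: "index_split K C n" and "length K = d"
  shows "det (stacked_rows_mat n d u t C) = det (signed_col_minor d (\<lambda>i. unitri_coeffs t (u i)) K)"
proof -
  let ?Z = "unit_rows_mat n d (\<lambda>i. unitri_coeffs t (u i)) C"
  let ?T = "mat n n (\<lambda>(l, k). t l k)"
  have "set C \<subseteq> {..<n}" and "length C + d = n"
    using split index_split_length[OF split] \<open>length K = d\<close> by (auto simp: index_split_def)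
  then have "det (stacked_rows_mat n d u t C) = det (?Z * ?T)"
    by (simp only: stacked_rows_mat_unitri_factor[of t, OF lower_zero diag_one])
  also have "\<dots> = det ?Z * det ?T"
    by (rule det_mult[of _ n]) (auto simp: stacked_rows_mat_def)
  also have "\<dots> = det (signed_col_minor d (\<lambda>i. unitri_coeffs t (u i)) K)"
    using det_unitri_mat[of t, OF lower_zero diag_one] det_stacked_unit_rows[OF split \<open>length K = d\<close>]
    by simp
  finally show ?thesis .
qed

section \<open>Frobenius coordinates of a Young diagram\<close>

lemma down_closed_eq_atLeastAtMost:
  fixes S :: "nat set"
  assumes "finite S" and "\<And>i. i \<in> S \<Longrightarrow> 1 \<le> i"
    and "\<And>i j. i \<in> S \<Longrightarrow> 1 \<le> j \<Longrightarrow> j \<le> i \<Longrightarrow> j \<in> S"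
  shows "S = {1..card S}"
proof (cases "S = {}")
  case False
  then have max: "Max S \<in> S"
    using assms(1) by simp
  have "S = {1..Max S}"
  proof
    show "S \<subseteq> {1..Max S}"
      using assms(1,2) by auto
    show "{1..Max S} \<subseteq> S"
      using assms(3)[OF max] by auto
  qed
  moreover have "card {1..Max S} = Max S"
    by simp
  ultimately show ?thesis
    by metis
qed simp

lemma part_eq_0: "length mu < i \<Longrightarrow> part mu i = 0"
  by (simp add: part_def)

lemma le_part_imp_le_length:
  assumes "1 \<le> j" and "j \<le> part mu i"
  shows "i \<le> length mu"
proof (rule ccontr)
  assume "\<not> i \<le> length mu"
  then have "part mu i = 0"
    by (simp add: part_eq_0)
  with assms show False
    by simp
qed

lemma conj_part_le_length: "conj_part mu j \<le> length mu"
proof -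
  have "conj_part mu j \<le> card {1..length mu}"
    unfolding conj_part_def by (rule card_mono) auto
  then show ?thesis
    by simp
qed

definition frob_q_list :: "nat list \<Rightarrow> nat list" where
  "frob_q_list mu = map (\<lambda>j. frob_q mu (Suc j)) [0..<frob_d mu]"

definition short_row_offsets :: "nat list \<Rightarrow> nat list" where
  "short_row_offsets mu = map (\<lambda>i. i - part mu (Suc i)) [frob_d mu..<length mu]"

locale young_diagram =
  fixes mu :: "nat list"
  assumes young: "young mu"
begin

lemma part_antimono:
  assumes "1 \<le> i" and "i \<le> j"
  shows "part mu j \<le> part mu i"
proof (cases "j \<le> length mu")
  case True
  have "sorted_wrt (\<ge>) mu"
    using young by (simp add: young_def)
  then have "mu ! (j - 1) \<le> mu ! (i - 1)"
    using assms True by (cases "i = j") (auto simp: sorted_wrt_iff_nth_less)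
  then show ?thesis
    using assms True by (simp add: part_def)
qed (simp add: part_eq_0)

lemma conj_part_rows:
  assumes "1 \<le> j"
  shows "{i. 1 \<le> i \<and> i \<le> length mu \<and> j \<le> part mu i} = {1..conj_part mu j}"
  unfolding conj_part_def
proof (rule down_closed_eq_atLeastAtMost)
  show "finite {i. 1 \<le> i \<and> i \<le> length mu \<and> j \<le> part mu i}"
    by (rule finite_subset[of _ "{..length mu}"]) auto
  fix i k
  assume "i \<in> {i. 1 \<le> i \<and> i \<le> length mu \<and> j \<le> part mu i}" "1 \<le> k" "k \<le> i"
  then show "k \<in> {i. 1 \<le> i \<and> i \<le> length mu \<and> j \<le> part mu i}"
    using part_antimono[of k i] by auto
qed auto

lemma le_conj_part_iff:
  assumes "1 \<le> i" and "1 \<le> j"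
  shows "i \<le> conj_part mu j \<longleftrightarrow> j \<le> part mu i"
proof -
  have "i \<le> conj_part mu j \<longleftrightarrow> i \<in> {i. 1 \<le> i \<and> i \<le> length mu \<and> j \<le> part mu i}"
    using conj_part_rows[OF assms(2)] assms(1) by simp
  also have "\<dots> \<longleftrightarrow> j \<le> part mu i"
    using assms le_part_imp_le_length[OF assms(2)] by auto
  finally show ?thesis .
qed

lemma conj_part_antimono:
  assumes "1 \<le> i" and "i \<le> j"
  shows "conj_part mu j \<le> conj_part mu i"
proof (cases "conj_part mu j = 0")
  case False
  then have "j \<le> part mu (conj_part mu j)"
    using assms le_conj_part_iff[of "conj_part mu j" j] by simp
  then show ?thesis
    using False assms le_conj_part_iff[of "conj_part mu j" i] by simp
qed simp

lemma diagonal_rows: "{i. 1 \<le> i \<and> i \<le> part mu i} = {1..frob_d mu}"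
  unfolding frob_d_def
proof (rule down_closed_eq_atLeastAtMost)
  show "finite {i. 1 \<le> i \<and> i \<le> part mu i}"
    by (rule finite_subset[of _ "{..length mu}"]) (auto intro: le_part_imp_le_length)
  fix i k
  assume "i \<in> {i. 1 \<le> i \<and> i \<le> part mu i}" "1 \<le> k" "k \<le> i"
  then show "k \<in> {i. 1 \<le> i \<and> i \<le> part mu i}"
    using part_antimono[of k i] by auto
qed auto

lemma le_frob_d_iff:
  assumes "1 \<le> i"
  shows "i \<le> frob_d mu \<longleftrightarrow> i \<le> part mu i"
proof -
  have "i \<le> frob_d mu \<longleftrightarrow> i \<in> {i. 1 \<le> i \<and> i \<le> part mu i}"
    using diagonal_rows assms by simp
  then show ?thesis
    using assms by simp
qed

lemma frob_d_le_length: "frob_d mu \<le> length mu"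
  using le_frob_d_iff[of "frob_d mu"] le_part_imp_le_length[of "frob_d mu" mu "frob_d mu"]
  by (cases "frob_d mu = 0") auto

lemma Suc_le_part_diagonal: "i < frob_d mu \<Longrightarrow> Suc i \<le> part mu (Suc i)"
  using le_frob_d_iff[of "Suc i"] by simp

lemma part_le_below_diagonal: "frob_d mu \<le> i \<Longrightarrow> part mu (Suc i) \<le> i"
  using le_frob_d_iff[of "Suc i"] by simp

lemma Suc_le_conj_part_diagonal: "j < frob_d mu \<Longrightarrow> Suc j \<le> conj_part mu (Suc j)"
  using le_frob_d_iff[of "Suc j"] le_conj_part_iff[of "Suc j" "Suc j"] by simp

lemma sorted_frob_q_list: "sorted_wrt (>) (frob_q_list mu)"
  unfolding frob_q_list_def
proof (rule sorted_wrt_map_mono[OF sorted_wrt_upt])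
  fix i j assume "i \<in> set [0..<frob_d mu]" "j \<in> set [0..<frob_d mu]" "i < j"
  then show "frob_q mu (Suc j) < frob_q mu (Suc i)"
    using conj_part_antimono[of "Suc i" "Suc j"] Suc_le_conj_part_diagonal[of j]
    by (simp add: frob_q_def)
qed

lemma sorted_short_row_offsets: "sorted_wrt (<) (short_row_offsets mu)"
  unfolding short_row_offsets_def
proof (rule sorted_wrt_map_mono[OF sorted_wrt_upt])
  fix i j assume "i \<in> set [frob_d mu..<length mu]" "j \<in> set [frob_d mu..<length mu]" "i < j"
  then show "i - part mu (Suc i) < j - part mu (Suc j)"
    using part_antimono[of "Suc i" "Suc j"] part_le_below_diagonal[of i] part_le_below_diagonal[of j]
    by simp
qed

lemma frob_q_list_short_row_offsets_disjoint:
  "set (frob_q_list mu) \<inter> set (short_row_offsets mu) = {}"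
proof -
  have "conj_part mu (Suc j) - Suc j \<noteq> i - part mu (Suc i)"
    if "j < frob_d mu" and "frob_d mu \<le> i" for i j
  proof (cases "Suc j \<le> part mu (Suc i)")
    case True
    then have "Suc i \<le> conj_part mu (Suc j)"
      using le_conj_part_iff by simp
    then show ?thesis
      using True that by linarith
  next
    case False
    then have "\<not> Suc i \<le> conj_part mu (Suc j)"
      using le_conj_part_iff by simp
    then show ?thesis
      using False that Suc_le_conj_part_diagonal[of j] part_le_below_diagonal[of i] by linarith
  qed
  then show ?thesis
    by (auto simp: frob_q_list_def short_row_offsets_def frob_q_def)
qed

lemma index_split_frobenius: "index_split (frob_q_list mu) (short_row_offsets mu) (length mu)"
proof (rule index_splitI)
  have "conj_part mu (Suc j) - Suc j < length mu" if "j < frob_d mu" for j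
    using conj_part_le_length[of mu "Suc j"] Suc_le_conj_part_diagonal[OF that] by linarith
  then show "set (frob_q_list mu) \<union> set (short_row_offsets mu) \<subseteq> {..<length mu}"
    by (auto simp: frob_q_list_def short_row_offsets_def frob_q_def)
  show "length (frob_q_list mu) + length (short_row_offsets mu) = length mu"
    using frob_d_le_length by (simp add: frob_q_list_def short_row_offsets_def)
qed (rule sorted_frob_q_list sorted_short_row_offsets frob_q_list_short_row_offsets_disjoint)+

end

section \<open>The Giambelli formula\<close>

definition h_tri :: "(int \<Rightarrow> complex) \<Rightarrow> nat \<Rightarrow> nat \<Rightarrow> sym_fun" where
  "h_tri a l k = hka (int k - int l) (tau (- int k) a)"

definition h_row :: "(int \<Rightarrow> complex) \<Rightarrow> nat \<Rightarrow> nat \<Rightarrow> sym_fun" where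
  "h_row a p k = hka (int p + int k + 1) (tau (- int k) a)"

lemma h_tri_lower_zero: "k < l \<Longrightarrow> h_tri a l k = 0"
  by (simp add: h_tri_def hka_def)

lemma h_tri_diag: "h_tri a l l = 1"
  by (simp add: h_tri_def hka_def)

context young_diagram
begin

lemma schur_a_eq_det_stacked_rows_mat:
  "schur_a mu a = det (stacked_rows_mat (length mu) (frob_d mu)
     (\<lambda>i. h_row a (frob_p mu (Suc i))) (h_tri a) (short_row_offsets mu))"
  unfolding schur_a_def
proof (intro arg_cong[where f = det] eq_matI, goal_cases)
  case (1 i k)
  then have i: "i < length mu" and k: "k < length mu"
    by (auto simp: stacked_rows_mat_def)
  show ?case
  proof (cases "i < frob_d mu")
    case True
    then show ?thesis
      using i k Suc_le_part_diagonal[OF True]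
      by (simp add: stacked_rows_mat_def h_row_def frob_p_def of_nat_diff algebra_simps)
  next
    case False
    then show ?thesis
      using i k part_le_below_diagonal[of i]
      by (simp add: stacked_rows_mat_def h_tri_def short_row_offsets_def of_nat_diff algebra_simps)
  qed
qed (auto simp: stacked_rows_mat_def)

lemma schur_a_eq_det_signed_col_minor:
  "schur_a mu a = det (signed_col_minor (frob_d mu)
     (\<lambda>i. unitri_coeffs (h_tri a) (h_row a (frob_p mu (Suc i)))) (frob_q_list mu))"
  using det_stacked_rows_mat[of "h_tri a", OF h_tri_lower_zero h_tri_diag index_split_frobenius]
  by (simp add: schur_a_eq_det_stacked_rows_mat frob_q_list_def)

end

lemma part_hook:
  "part (hook p q) i = (if i = 1 then Suc p else if 1 < i \<and> i \<le> Suc q then 1 else 0)"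
  by (cases i) (auto simp: part_def hook_def nth_Cons split: nat.split)

lemma young_hook: "young (hook p q)"
  by (auto simp: young_def hook_def sorted_wrt_iff_nth_less nth_Cons split: nat.split)

lemma frob_d_hook: "frob_d (hook p q) = 1"
proof -
  have "{i. 1 \<le> i \<and> i \<le> part (hook p q) i} = {1}"
    by (auto simp: part_hook)
  then show ?thesis
    by (simp add: frob_d_def)
qed

lemma frob_q_list_hook: "frob_q_list (hook p q) = [q]"
proof -
  have "length (hook p q) = Suc q"
    by (simp add: hook_def)
  then have "{i. 1 \<le> i \<and> i \<le> length (hook p q) \<and> 1 \<le> part (hook p q) i} = {1..Suc q}"
    by (auto simp: part_hook)
  then show ?thesis
    by (simp add: frob_q_list_def frob_d_hook frob_q_def conj_part_def)
qed

lemma schur_a_hook: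
  "schur_a (hook p q) a = (-1) ^ q * unitri_coeffs (h_tri a) (h_row a p) q"
proof -
  interpret young_diagram "hook p q"
    by unfold_locales (rule young_hook)
  have "frob_p (hook p q) 1 = p"
    by (simp add: frob_p_def part_hook)
  then show ?thesis
    by (simp add: schur_a_eq_det_signed_col_minor frob_d_hook frob_q_list_hook
        signed_col_minor_def det_single)
qed

theorem theorem5:
  fixes a :: "int \<Rightarrow> complex" and mu :: "nat list"
  assumes "young mu"
  shows "schur_a mu a =
    det (mat (frob_d mu) (frob_d mu)
      (\<lambda>(i, j). schur_a (hook (frob_p mu (i+1)) (frob_q mu (j+1))) a))"
proof -
  interpret young_diagram mu
    by unfold_locales (rule assms)
  have "schur_a mu a = det (signed_col_minor (frob_d mu)
          (\<lambda>i. unitri_coeffs (h_tri a) (h_row a (frob_p mu (Suc i)))) (frob_q_list mu))"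
    by (rule schur_a_eq_det_signed_col_minor)
  also have "signed_col_minor (frob_d mu)
          (\<lambda>i. unitri_coeffs (h_tri a) (h_row a (frob_p mu (Suc i)))) (frob_q_list mu)
      = mat (frob_d mu) (frob_d mu) (\<lambda>(i, j). schur_a (hook (frob_p mu (i+1)) (frob_q mu (j+1))) a)"
    by (rule eq_matI) (simp_all add: signed_col_minor_def frob_q_list_def schur_a_hook)
  finally show ?thesis .
qed

end
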